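(* Let $n\ge1$ players all have the same additive valuation $v$ on a finite set of goods $M$. Goods of value $0$ are allowed. Then there exists an allocation that is both EFX and Pareto optimal.
   Context: A valuation is a function $v:2^M\to\mathbb{R}_{\ge0}$ with $v(\emptyset)=0$ that is monotone: $v(S)\le v(T)$ whenever $S\subseteq T$. It is additive if $v(S)=\sum_{g\in S}v(\{g\})$ for all $S\subseteq M$. An allocation is an ordered partition $(A_1,\dots,A_n)$ of $M$; parts may be empty. It is EFX if for all players $i,j$ and every $g\in A_j$ we have $v_i(A_i)\ge v_i(A_j\setminus\{g\})$. It is Pareto optimal (PO) if there is no allocation $B$ with $v_i(B_i)\ge v_i(A_i)$ for all $i$ and $v_j(B_j)>v_j(A_j)$ for some $j$. *)

theory Defs
  imports Complex_Main
begin

definition is_allocation :: "nat \<Rightarrow> 'g set \<Rightarrow> (nat \<Rightarrow> 'g set) \<Rightarrow> bool" where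
  "is_allocation n M A \<longleftrightarrow>
     (\<forall>i<n. A i \<subseteq> M) \<and> (\<Union>i<n. A i) = M \<and>
     (\<forall>i<n. \<forall>j<n. i \<noteq> j \<longrightarrow> A i \<inter> A j = {})"

definition valuation :: "'g set \<Rightarrow> ('g set \<Rightarrow> real) \<Rightarrow> bool" where
  "valuation M v \<longleftrightarrow> v {} = 0 \<and> (\<forall>S. S \<subseteq> M \<longrightarrow> v S \<ge> 0) \<and>
     (\<forall>S T. S \<subseteq> T \<and> T \<subseteq> M \<longrightarrow> v S \<le> v T)"

definition additive_valuation :: "'g set \<Rightarrow> ('g set \<Rightarrow> real) \<Rightarrow> bool" where
  "additive_valuation M v \<longleftrightarrow> (\<forall>S. S \<subseteq> M \<longrightarrow> v S = (\<Sum>g\<in>S. v {g}))"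

definition EFX :: "nat \<Rightarrow> (nat \<Rightarrow> 'g set \<Rightarrow> real) \<Rightarrow> (nat \<Rightarrow> 'g set) \<Rightarrow> bool" where
  "EFX n vs A \<longleftrightarrow>
     (\<forall>i<n. \<forall>j<n. \<forall>g\<in>A j. vs i (A i) \<ge> vs i (A j - {g}))"

definition pareto_optimal ::
  "nat \<Rightarrow> 'g set \<Rightarrow> (nat \<Rightarrow> 'g set \<Rightarrow> real) \<Rightarrow> (nat \<Rightarrow> 'g set) \<Rightarrow> bool" where
  "pareto_optimal n M vs A \<longleftrightarrow>
     \<not> (\<exists>B. is_allocation n M B \<and> (\<forall>i<n. vs i (B i) \<ge> vs i (A i)) \<and>
            (\<exists>j<n. vs j (B j) > vs j (A j)))"

end

theory Submission
  imports Defs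
begin

text \<open>With identical additive valuations every allocation has the same total value v(M),
so no allocation can Pareto-dominate another and every allocation is Pareto optimal.
An EFX allocation is built greedily: hand out the goods in decreasing order of value, each to
a currently poorest bundle. When a good g joins the poorest bundle, every other good there is
worth at least v(g), so removing any good from the enlarged bundle leaves at most its old
value, which nobody envied.\<close>

lemma sum_over_allocation:
  assumes "is_allocation n M A" "finite M"
  shows "(\<Sum>i<n. sum w (A i)) = sum w M"
proof -
  have "sum w (\<Union>(A ` {..<n})) = (\<Sum>i<n. sum w (A i))"
    using assms unfolding is_allocation_def
    by (intro sum.UNION_disjoint) (auto intro: finite_subset)
  then show ?thesis
    using assms unfolding is_allocation_def by simp
qed

lemma pareto_optimal_identical_additive:
  assumes "is_allocation n M A" "finite M" "additive_valuation M v"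
  shows "pareto_optimal n M (\<lambda>_. v) A"
  unfolding pareto_optimal_def
proof
  define w where "w g = v {g}" for g
  have v_sum: "v S = sum w S" if "S \<subseteq> M" for S
    using assms(3) that unfolding additive_valuation_def w_def by auto
  assume "\<exists>B. is_allocation n M B \<and> (\<forall>i<n. v (A i) \<le> v (B i)) \<and> (\<exists>j<n. v (A j) < v (B j))"
  then obtain B where B: "is_allocation n M B" "\<forall>i<n. v (A i) \<le> v (B i)"
    "\<exists>j<n. v (A j) < v (B j)"
    by blast
  have "\<forall>i<n. A i \<subseteq> M" "\<forall>i<n. B i \<subseteq> M"
    using assms(1) B(1) unfolding is_allocation_def by auto
  then have "(\<Sum>i<n. sum w (A i)) < (\<Sum>i<n. sum w (B i))"
    using B(2,3) v_sum by (intro sum_strict_mono_ex1) auto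
  then show False
    using sum_over_allocation[OF assms(1,2), of w] sum_over_allocation[OF B(1) assms(2), of w]
    by simp
qed

lemma is_allocation_empty: "is_allocation n {} (\<lambda>_. {})"
  unfolding is_allocation_def by simp

lemma is_allocation_insert:
  assumes "is_allocation n S A" "k < n" "g \<notin> S"
  shows "is_allocation n (insert g S) (A(k := insert g (A k)))"
proof -
  have "(\<Union>i<n. (A(k := insert g (A k))) i) = insert g (\<Union>i<n. A i)"
    using assms(2) by (auto split: if_splits)
  then show ?thesis
    using assms unfolding is_allocation_def by auto
qed

lemma EFX_insert_least_good_into_poorest:
  fixes w :: "'g \<Rightarrow> real"
  assumes alloc: "is_allocation n S A" and "finite S" "g \<notin> S" "k < n"
    and poorest: "\<forall>i<n. sum w (A k) \<le> sum w (A i)"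
    and least: "\<forall>h\<in>S. w g \<le> w h" and "0 \<le> w g"
    and efx: "EFX n (\<lambda>_. sum w) A"
  defines "A' \<equiv> A(k := insert g (A k))"
  shows "EFX n (\<lambda>_. sum w) A'"
  unfolding EFX_def
proof (intro allI impI ballI)
  have Ak: "finite (A k)" "A k \<subseteq> S" "g \<notin> A k"
    using alloc \<open>finite S\<close> \<open>g \<notin> S\<close> \<open>k < n\<close> unfolding is_allocation_def
    by (auto intro: finite_subset)
  have gain: "sum w (A i) \<le> sum w (A' i)" for i
    using Ak \<open>0 \<le> w g\<close> unfolding A'_def by simp
  fix i j h
  assume "i < n" "j < n" and h_in: "h \<in> A' j"
  have "sum w (A' j - {h}) \<le> sum w (A i)"
  proof (cases "j = k")
    case False
    then show ?thesis
      using efx h_in \<open>i < n\<close> \<open>j < n\<close> unfolding EFX_def A'_def by simp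
  next
    case True
    have "sum w (A' j - {h}) \<le> sum w (A k)"
    proof (cases "h = g")
      case True
      then show ?thesis using \<open>j = k\<close> Ak by (simp add: A'_def)
    next
      case False
      then have "h \<in> A k" using h_in \<open>j = k\<close> by (simp add: A'_def)
      have "A' j - {h} = insert g (A k - {h})"
        using \<open>j = k\<close> False by (auto simp: A'_def)
      then have "sum w (A' j - {h}) = w g + sum w (A k) - w h"
        using Ak \<open>h \<in> A k\<close> by (simp add: sum_diff1)
      also have "\<dots> \<le> sum w (A k)"
        using least \<open>h \<in> A k\<close> Ak by auto
      finally show ?thesis .
    qed
    then show ?thesis using poorest \<open>i < n\<close> by fastforce
  qed
  then show "sum w (A' j - {h}) \<le> sum w (A' i)"
    using gain[of i] by simp
qed

lemma EFX_allocation_exists: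
  fixes w :: "'g \<Rightarrow> real"
  assumes "n \<ge> 1" "finite S" "\<forall>g\<in>S. 0 \<le> w g"
  shows "\<exists>A. is_allocation n S A \<and> EFX n (\<lambda>_. sum w) A"
  using assms(2,3)
proof (induction S rule: finite_ranking_induct[where f = "\<lambda>g. - w g"])
  case empty
  show ?case
    using is_allocation_empty unfolding EFX_def by fastforce
next
  case (insert g S)
  then obtain A where A: "is_allocation n S A" "EFX n (\<lambda>_. sum w) A"
    by auto
  show ?case
  proof (cases "g \<in> S")
    case True
    then show ?thesis using A by (auto simp: insert_absorb)
  next
    case False
    have "{..<n} \<noteq> {}" using \<open>n \<ge> 1\<close> by (simp add: lessThan_empty_iff)
    then obtain k where "is_arg_min (\<lambda>i. sum w (A i)) (\<lambda>i. i \<in> {..<n}) k"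
      using ex_is_arg_min_if_finite[of "{..<n}" "\<lambda>i. sum w (A i)"] by blast
    then have "k < n" "\<forall>i<n. sum w (A k) \<le> sum w (A i)"
      by (auto simp: is_arg_min_linorder)
    then show ?thesis
      using is_allocation_insert[OF A(1) _ False]
        EFX_insert_least_good_into_poorest[OF A(1) insert(1) False _ _ _ _ A(2)] insert
      by (metis insertI1 neg_le_iff_le)
  qed
qed

theorem theorem5p3:
  fixes n :: nat and M :: "'g set" and v :: "'g set \<Rightarrow> real"
  assumes "n \<ge> 1" and "finite M"
    and "valuation M v" and "additive_valuation M v"
  shows "\<exists>A. is_allocation n M A \<and> EFX n (\<lambda>_. v) A \<and>
             pareto_optimal n M (\<lambda>_. v) A"
proof -
  define w where "w g = v {g}" for g
  have v_sum: "v S = sum w S" if "S \<subseteq> M" for S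
    using assms(4) that unfolding additive_valuation_def w_def by auto
  have "\<forall>g\<in>M. 0 \<le> w g"
    using assms(3) unfolding valuation_def w_def by auto
  then obtain A where A: "is_allocation n M A" "EFX n (\<lambda>_. sum w) A"
    using EFX_allocation_exists[OF assms(1,2)] by blast
  then have "\<forall>i<n. A i \<subseteq> M"
    unfolding is_allocation_def by auto
  then have "EFX n (\<lambda>_. v) A"
    using A(2) v_sum unfolding EFX_def by (metis Diff_subset subset_trans)
  then show ?thesis
    using A(1) pareto_optimal_identical_additive[OF A(1) assms(2,4)] by blast
qed

end
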